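(* Let $f$ be a $C^\infty$ function on $\mathbb R$ with no flat zero (for every $x$ with $f(x)=0$ there exists $r\in\mathbb N$ with $f^{(r)}(x)\neq0$), and let $a<b$ with $f(a)f(b)\neq0$. Then the number of zeros of $f$ in $[a,b]$ (counted without multiplicity) is finite and $$\mathcal H^0(\{f=0\}\cap[a,b])=\frac1\pi\Big[\arctan\frac{f'(b)}{f(b)}-\arctan\frac{f'(a)}{f(a)}+\int_a^b\frac{f'(x)^2-f(x)f''(x)}{f(x)^2+f'(x)^2}\,dx\Big].$$
   Context: $\mathcal H^0(\{f=0\}\cap[a,b])$ denotes the number of distinct zeros of $f$ in $[a,b]$. *)

theory Defs
  imports "HOL-Analysis.Analysis"
begin

definition smooth_real :: "(real \<Rightarrow> real) \<Rightarrow> bool" where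
  "smooth_real f \<longleftrightarrow> (\<forall>n x. ((deriv ^^ n) f) differentiable (at x))"

definition no_flat_zero :: "(real \<Rightarrow> real) \<Rightarrow> bool" where
  "no_flat_zero f \<longleftrightarrow> (\<forall>x. f x = 0 \<longrightarrow> (\<exists>r::nat. (deriv ^^ r) f x \<noteq> 0))"

end

theory Submission
  imports Defs
begin

(*
  Let N(x) be the number of zeros of f in [a, x) and
  theta(x) = pi N(x) + arccot (f'(x) / f(x)), with arccot in (0, pi) and theta = pi (N + 1)
  at a zero. Where f does not vanish, theta' = (f'^2 - f f'') / (f^2 + f'^2). At a zero z,
  Taylor expansion at the first nonvanishing derivative (which exists since z is not flat)
  shows that f / f' tends to 0 with the sign of x - z, so f' / f jumps from -oo to +oo:
  arccot drops by pi exactly where N increases by one, and theta is continuous. The zeros are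
  isolated, hence finite in [a, b], and the fundamental theorem of calculus with finitely
  many exceptional points gives theta(b) - theta(a) = integral of theta', where
  theta(a) = arccot (f'(a) / f(a)) and theta(b) = pi (number of zeros) + arccot (f'(b) / f(b)).
*)

lemma smooth_real_has_real_derivative:
  assumes "smooth_real f"
  shows "((deriv ^^ n) f has_real_derivative (deriv ^^ Suc n) f x) (at x)"
  using assms unfolding smooth_real_def
  by (simp add: DERIV_deriv_iff_real_differentiable)

lemma no_flat_zero_order:
  assumes "no_flat_zero f" and "f z = 0"
  obtains r where "0 < r" and "(deriv ^^ r) f z \<noteq> 0" and "\<forall>i<r. (deriv ^^ i) f z = 0"
proof -
  have ex: "\<exists>r. (deriv ^^ r) f z \<noteq> 0"
    using assms unfolding no_flat_zero_def by blast
  define r where "r = (LEAST r. (deriv ^^ r) f z \<noteq> 0)"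
  have "(deriv ^^ r) f z \<noteq> 0"
    unfolding r_def using ex by (rule LeastI_ex)
  moreover have "\<forall>i<r. (deriv ^^ i) f z = 0"
    unfolding r_def using not_less_Least by blast
  moreover from calculation have "0 < r"
    using assms(2) by (cases r) auto
  ultimately show thesis
    using that by blast
qed

lemma Taylor_vanishing_derivatives:
  assumes sm: "smooth_real f" and "j \<le> r" and vanish: "\<forall>i<r. (deriv ^^ i) f z = 0"
  obtains t where "\<bar>t - z\<bar> \<le> \<bar>y - z\<bar>"
    and "(deriv ^^ j) f y = (deriv ^^ r) f t / fact (r - j) * (y - z) ^ (r - j)"
proof (cases "j = r \<or> y = z")
  case True
  then consider "j = r" | "y = z" and "j < r"
    using \<open>j \<le> r\<close> by linarith
  then show thesis
  proof cases
    case 1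
    then show thesis by (intro that[of y]) auto
  next
    case 2
    then show thesis using vanish by (intro that[of z]) auto
  qed
next
  case False
  then have "0 < r - j" and "y \<noteq> z"
    using \<open>j \<le> r\<close> by auto
  have "\<forall>m t. m < r - j \<and> min y z \<le> t \<and> t \<le> max y z \<longrightarrow>
      ((deriv ^^ (j + m)) f has_real_derivative (deriv ^^ (j + Suc m)) f t) (at t)"
    using smooth_real_has_real_derivative[OF sm] by simp
  from Taylor[of "r - j" "\<lambda>m. (deriv ^^ (j + m)) f" _ "min y z" "max y z" z y,
      OF \<open>0 < r - j\<close> refl this]
  obtain t where t: "if y < z then y < t \<and> t < z else z < t \<and> t < y"
    and taylor: "(deriv ^^ j) f y = (\<Sum>m<r - j. (deriv ^^ (j + m)) f z / fact m * (y - z) ^ m)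
        + (deriv ^^ r) f t / fact (r - j) * (y - z) ^ (r - j)"
    using \<open>y \<noteq> z\<close> \<open>j \<le> r\<close> by auto
  have "(\<Sum>m<r - j. (deriv ^^ (j + m)) f z / fact m * (y - z) ^ m) = 0"
    using vanish by (intro sum.neutral) auto
  with taylor have "(deriv ^^ j) f y = (deriv ^^ r) f t / fact (r - j) * (y - z) ^ (r - j)"
    by simp
  moreover have "\<bar>t - z\<bar> \<le> \<bar>y - z\<bar>"
    using t by (auto split: if_splits)
  ultimately show thesis
    using that by blast
qed

lemma quotient_near_common_value:
  fixes p q c :: real
  assumes p: "\<bar>p - c\<bar> < \<bar>c\<bar> / 2" and q: "\<bar>q - c\<bar> < \<bar>c\<bar> / 2"
  shows "0 < p / q \<and> p / q < 3"
proof (cases "c > 0")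
  case True
  with p q have "0 < p" "0 < q" "p < 3 * q" by linarith+
  then show ?thesis by (simp add: divide_less_eq)
next
  case False
  with p q have "p < 0" "q < 0" "3 * q < p" by linarith+
  then show ?thesis by (simp add: divide_less_eq zero_less_divide_iff)
qed

text \<open>With r the order of the zero z, Taylor expansion gives f y / f' y = (y - z) \<rho> / r,
  where \<rho> is a quotient of two values of the r-th derivative near z, hence in (0, 3).\<close>
lemma eventually_quotient_by_deriv_at_zero:
  assumes sm: "smooth_real f" and "no_flat_zero f" and "f z = 0"
  shows "\<forall>\<^sub>F y in at z. 0 < (y - z) * (f y / deriv f y) \<and> \<bar>f y / deriv f y\<bar> \<le> 3 * \<bar>y - z\<bar>"
proof -
  obtain r where "0 < r" and "(deriv ^^ r) f z \<noteq> 0" and vanish: "\<forall>i<r. (deriv ^^ i) f z = 0"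
    using no_flat_zero_order[OF assms(2,3)] by blast
  define c where "c = (deriv ^^ r) f z"
  define D where "D = (deriv ^^ r) f"
  have "isCont D z"
    unfolding D_def using smooth_real_has_real_derivative[OF sm] by (rule DERIV_isCont)
  moreover have "0 < \<bar>c\<bar> / 2"
    using \<open>(deriv ^^ r) f z \<noteq> 0\<close> c_def by simp
  ultimately obtain e where "0 < e" and e: "\<And>t. \<bar>t - z\<bar> < e \<Longrightarrow> \<bar>D t - c\<bar> < \<bar>c\<bar> / 2"
    unfolding continuous_at_eps_delta c_def D_def dist_real_def by blast
  have "0 < (y - z) * (f y / deriv f y) \<and> \<bar>f y / deriv f y\<bar> \<le> 3 * \<bar>y - z\<bar>"
    if "y \<noteq> z" and "\<bar>y - z\<bar> < e" for y
  proof -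
    obtain t where "\<bar>t - z\<bar> \<le> \<bar>y - z\<bar>" and ft: "f y = D t / fact r * (y - z) ^ r"
      using Taylor_vanishing_derivatives[OF sm _ vanish, of 0 y] unfolding D_def by auto
    obtain t' where "\<bar>t' - z\<bar> \<le> \<bar>y - z\<bar>"
      and f't: "deriv f y = D t' / fact (r - 1) * (y - z) ^ (r - 1)"
      using Taylor_vanishing_derivatives[OF sm _ vanish, of 1 y] \<open>0 < r\<close> unfolding D_def by auto
    define \<rho> where "\<rho> = D t / D t'"
    have \<rho>: "0 < \<rho> \<and> \<rho> < 3"
      unfolding \<rho>_def
      using e[OF order.strict_trans1[OF \<open>\<bar>t - z\<bar> \<le> \<bar>y - z\<bar>\<close> that(2)]]
        e[OF order.strict_trans1[OF \<open>\<bar>t' - z\<bar> \<le> \<bar>y - z\<bar>\<close> that(2)]]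
      by (rule quotient_near_common_value)
    then have "D t' \<noteq> 0"
      unfolding \<rho>_def by auto
    obtain s where r: "r = Suc s"
      using \<open>0 < r\<close> gr0_implies_Suc by blast
    define P where "P = (y - z) ^ s / fact s"
    have "P \<noteq> 0"
      using \<open>y \<noteq> z\<close> unfolding P_def by simp
    have "f y = (y - z) * D t / r * P"
      unfolding ft r P_def by (simp add: fact_Suc)
    moreover have "deriv f y = D t' * P"
      unfolding f't r P_def by simp
    ultimately have quotient: "f y / deriv f y = (y - z) * \<rho> / r"
      using \<open>P \<noteq> 0\<close> unfolding \<rho>_def by simp
    have "0 < (y - z)\<^sup>2 * \<rho> / r"
      using \<rho> \<open>0 < r\<close> \<open>y \<noteq> z\<close> by simp
    then have sign: "0 < (y - z) * ((y - z) * \<rho> / r)"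
      by (simp add: power2_eq_square mult.assoc)
    have "\<rho> / r \<le> 3"
      using \<rho> \<open>0 < r\<close> by (simp add: divide_le_eq)
    then have "\<bar>y - z\<bar> * (\<rho> / r) \<le> \<bar>y - z\<bar> * 3"
      by (rule mult_left_mono) simp
    then have bound: "\<bar>(y - z) * \<rho> / r\<bar> \<le> 3 * \<bar>y - z\<bar>"
      using \<rho> by (simp add: abs_mult)
    show ?thesis
      unfolding quotient using sign bound ..
  qed
  then show ?thesis
    unfolding eventually_at dist_real_def using \<open>0 < e\<close> by blast
qed

lemma eventually_nonzero_at:
  assumes "smooth_real f" and "no_flat_zero f"
  shows "\<forall>\<^sub>F y in at z. f y \<noteq> 0"
proof (cases "f z = 0")
  case True
  then show ?thesis
    using eventually_quotient_by_deriv_at_zero[OF assms True] by (auto elim: eventually_mono)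
next
  case False
  have "isCont f z"
    using smooth_real_has_real_derivative[OF assms(1), of 0 z] by (simp add: DERIV_isCont)
  then show ?thesis
    using False unfolding isCont_def by (rule tendsto_imp_eventually_ne)
qed

lemma finite_zeros_in_compact:
  assumes "smooth_real f" and "no_flat_zero f" and "compact K"
  shows "finite {x \<in> K. f x = 0}"
proof -
  have "finite (K \<inter> {x. f x = 0})"
    using eventually_nonzero_at[OF assms(1,2)]
    by (intro finite_not_islimpt_in_compact[OF assms(3)]) (simp add: islimpt_iff_eventually)
  then show ?thesis
    by (simp add: Collect_conj_eq Int_commute)
qed

lemma quotient_by_deriv_tendsto_0:
  assumes "smooth_real f" and "no_flat_zero f" and "f z = 0"
  shows "((\<lambda>y. f y / deriv f y) \<longlongrightarrow> 0) (at z)"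
proof (rule Lim_null_comparison)
  show "\<forall>\<^sub>F y in at z. norm (f y / deriv f y) \<le> 3 * \<bar>y - z\<bar>"
    using eventually_quotient_by_deriv_at_zero[OF assms] by (auto elim: eventually_mono)
  have "((\<lambda>y. 3 * \<bar>y - z\<bar>) \<longlongrightarrow> 3 * \<bar>z - z\<bar>) (at z)"
    by (intro tendsto_intros)
  then show "((\<lambda>y. 3 * \<bar>y - z\<bar>) \<longlongrightarrow> 0) (at z)"
    by simp
qed

lemma eventually_card_less:
  fixes Z :: "'a::linorder_topology set"
  assumes "finite Z"
  shows "\<forall>\<^sub>F y in nhds x. card {w \<in> Z. w < y} = card {w \<in> Z. w < x} + (if x \<in> Z \<and> x < y then 1 else 0)"
proof -
  have "\<forall>\<^sub>F y in nhds x. \<forall>w \<in> Z - {x}. w < y \<longleftrightarrow> w < x"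
  proof (rule eventually_ball_finite[OF finite_Diff[OF assms]], rule ballI)
    fix w assume "w \<in> Z - {x}"
    then consider "w < x" | "x < w" by fastforce
    then show "\<forall>\<^sub>F y in nhds x. w < y \<longleftrightarrow> w < x"
    proof cases
      case 1
      then show ?thesis
        using eventually_nhds_in_open[of "{w<..}" x] by (auto elim: eventually_mono)
    next
      case 2
      then show ?thesis
        using eventually_nhds_in_open[of "{..<w}" x] by (auto elim: eventually_mono)
    qed
  qed
  then show ?thesis
  proof (rule eventually_mono)
    fix y assume "\<forall>w \<in> Z - {x}. w < y \<longleftrightarrow> w < x"
    then have "{w \<in> Z. w < y} = {w \<in> Z. w < x} \<union> (if x \<in> Z \<and> x < y then {x} else {})"
      by auto
    then show "card {w \<in> Z. w < y} = card {w \<in> Z. w < x} + (if x \<in> Z \<and> x < y then 1 else 0)"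
      using assms by auto
  qed
qed

lemma arctan_quotient_has_real_derivative:
  assumes "(f has_real_derivative f') (at x)" and "(g has_real_derivative g') (at x)"
    and "f x \<noteq> 0"
  shows "((\<lambda>y. arctan (g y / f y)) has_real_derivative
    (g' * f x - g x * f') / ((f x)\<^sup>2 + (g x)\<^sup>2)) (at x)"
proof -
  have chain: "((\<lambda>y. arctan (g y / f y)) has_real_derivative
      inverse (1 + (g x / f x)\<^sup>2) * ((g' * f x - g x * f') / (f x * f x))) (at x)"
    by (rule DERIV_chain2[OF DERIV_arctan DERIV_divide[OF assms(2,1,3)]])
  have "(f x)\<^sup>2 + (g x)\<^sup>2 \<noteq> 0"
    using assms(3) by (simp add: add_nonneg_eq_0_iff)
  moreover have "1 + (g x / f x)\<^sup>2 = ((f x)\<^sup>2 + (g x)\<^sup>2) / (f x * f x)"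
    using assms(3) by (simp add: field_simps power2_eq_square)
  ultimately have "inverse (1 + (g x / f x)\<^sup>2) * ((g' * f x - g x * f') / (f x * f x))
      = (g' * f x - g x * f') / ((f x)\<^sup>2 + (g x)\<^sup>2)"
    using assms(3) by simp
  with chain show ?thesis
    by simp
qed

text \<open>For Z the zeros of f in an interval this is the Pruefer angle, a continuous \<theta> with
  (f, f') parallel to (sin \<theta>, cos \<theta>); pi / 2 - arctan is the arccotangent.\<close>
definition prufer_angle :: "(real \<Rightarrow> real) \<Rightarrow> real set \<Rightarrow> real \<Rightarrow> real" where
  "prufer_angle f Z x = pi * card {w \<in> Z. w < x}
    + (if f x = 0 then pi else pi / 2 - arctan (deriv f x / f x))"

lemma prufer_angle_has_real_derivative:
  assumes sm: "smooth_real f" and "finite Z" and "x \<notin> Z" and "f x \<noteq> 0"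
  shows "(prufer_angle f Z has_real_derivative
    ((deriv f x)\<^sup>2 - f x * deriv (deriv f) x) / ((f x)\<^sup>2 + (deriv f x)\<^sup>2)) (at x)"
proof -
  define N where "N = card {w \<in> Z. w < x}"
  have df: "(f has_real_derivative deriv f x) (at x)"
    using smooth_real_has_real_derivative[OF sm, of 0 x] by simp
  have ddf: "(deriv f has_real_derivative deriv (deriv f) x) (at x)"
    using smooth_real_has_real_derivative[OF sm, of 1 x] by simp
  have "\<forall>\<^sub>F y in nhds x. f y \<noteq> 0"
    using tendsto_imp_eventually_ne[OF DERIV_isCont[OF df, unfolded isCont_def] \<open>f x \<noteq> 0\<close>]
      \<open>f x \<noteq> 0\<close> by (simp add: eventually_nhds_conv_at)
  moreover have "\<forall>\<^sub>F y in nhds x. card {w \<in> Z. w < y} = N"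
    using eventually_card_less[OF \<open>finite Z\<close>, of x] \<open>x \<notin> Z\<close> unfolding N_def by simp
  ultimately have locally:
    "\<forall>\<^sub>F y in nhds x. prufer_angle f Z y = pi * N + pi / 2 - arctan (deriv f y / f y)"
    by eventually_elim (simp add: prufer_angle_def)
  have "((\<lambda>y. pi * N + pi / 2 - arctan (deriv f y / f y)) has_real_derivative
      ((deriv f x)\<^sup>2 - f x * deriv (deriv f) x) / ((f x)\<^sup>2 + (deriv f x)\<^sup>2)) (at x)"
    using DERIV_diff[OF DERIV_const[of "pi * N + pi / 2"]
        arctan_quotient_has_real_derivative[OF df ddf \<open>f x \<noteq> 0\<close>]]
    by (simp add: diff_divide_distrib power2_eq_square mult.commute[of "deriv (deriv f) x"])
  then show ?thesis
    using DERIV_cong_ev[OF refl locally refl] by blast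
qed

lemma isCont_prufer_angle_at_zero:
  assumes "smooth_real f" and "no_flat_zero f" and "finite Z" and "z \<in> Z" and "f z = 0"
  shows "isCont (prufer_angle f Z) z"
proof -
  define N where "N = card {w \<in> Z. w < z}"
  define u where "u y = f y / deriv f y" for y
  have "\<forall>\<^sub>F y in at z. card {w \<in> Z. w < y} = N + (if z < y then 1 else 0)"
    using eventually_card_less[OF \<open>finite Z\<close>, of z] \<open>z \<in> Z\<close>
    unfolding N_def eventually_nhds_conv_at by simp
  \<comment> \<open>arctan (1 / u) = sgn u pi / 2 - arctan u, and u turns positive where the count jumps\<close>
  with eventually_quotient_by_deriv_at_zero[OF assms(1,2,5)]
  have "\<forall>\<^sub>F y in at z. prufer_angle f Z y = pi * (N + 1) + arctan (u y)"
  proof eventually_elim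
    case (elim y)
    then have "0 < (y - z) * u y" and "f y \<noteq> 0"
      unfolding u_def by auto
    then have "u y \<noteq> 0" and inverse: "deriv f y / f y = 1 / u y"
      unfolding u_def by auto
    have "sgn (u y) = (if z < y then 1 else - 1)"
      using \<open>0 < (y - z) * u y\<close> by (auto simp: zero_less_mult_iff)
    then show ?case
      using elim \<open>f y \<noteq> 0\<close> Transcendental.arctan_inverse[OF \<open>u y \<noteq> 0\<close>]
      unfolding prufer_angle_def inverse by (simp add: algebra_simps)
  qed
  moreover have "((\<lambda>y. pi * (N + 1) + arctan (u y)) \<longlongrightarrow> pi * (N + 1) + arctan 0) (at z)"
    using quotient_by_deriv_tendsto_0[OF assms(1,2,5)] unfolding u_def by (intro tendsto_intros)
  moreover have "prufer_angle f Z z = pi * (N + 1) + arctan 0"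
    using \<open>f z = 0\<close> unfolding prufer_angle_def N_def by (simp add: algebra_simps)
  ultimately show ?thesis
    unfolding isCont_def by (simp add: tendsto_cong)
qed

lemma continuous_on_prufer_angle:
  assumes "smooth_real f" and "no_flat_zero f" and "finite Z"
    and zeros: "\<And>x. x \<in> S \<Longrightarrow> x \<in> Z \<longleftrightarrow> f x = 0"
  shows "continuous_on S (prufer_angle f Z)"
proof (intro continuous_at_imp_continuous_on ballI)
  fix x assume "x \<in> S"
  show "isCont (prufer_angle f Z) x"
  proof (cases "f x = 0")
    case True
    with \<open>x \<in> S\<close> show ?thesis
      using isCont_prufer_angle_at_zero[OF assms(1-3)] zeros by blast
  next
    case False
    with \<open>x \<in> S\<close> show ?thesis
      using prufer_angle_has_real_derivative[OF assms(1,3)] zeros DERIV_isCont by blast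
  qed
qed

lemma prufer_angle_has_integral:
  assumes "smooth_real f" and "no_flat_zero f" and "a \<le> b"
  defines "Z \<equiv> {x \<in> {a..b}. f x = 0}"
  shows "((\<lambda>x. ((deriv f x)\<^sup>2 - f x * deriv (deriv f) x) / ((f x)\<^sup>2 + (deriv f x)\<^sup>2))
    has_integral prufer_angle f Z b - prufer_angle f Z a) {a..b}"
proof (rule fundamental_theorem_of_calculus_interior_strong)
  show "finite Z"
    unfolding Z_def using assms(1,2) compact_Icc by (rule finite_zeros_in_compact)
  with assms(1,2) show "continuous_on {a..b} (prufer_angle f Z)"
    by (rule continuous_on_prufer_angle) (simp add: Z_def)
  show "(prufer_angle f Z has_vector_derivative
      ((deriv f x)\<^sup>2 - f x * deriv (deriv f) x) / ((f x)\<^sup>2 + (deriv f x)\<^sup>2)) (at x)"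
    if "x \<in> {a<..<b} - Z" for x
    using prufer_angle_has_real_derivative[OF assms(1) \<open>finite Z\<close>] that
    by (simp add: Z_def has_real_derivative_iff_has_vector_derivative[symmetric])
qed (fact \<open>a \<le> b\<close>)

theorem corollary3:
  fixes f :: "real \<Rightarrow> real" and a b :: real
  assumes "smooth_real f"
    and "no_flat_zero f"
    and "a < b"
    and "f a * f b \<noteq> 0"
  shows "finite {x \<in> {a..b}. f x = 0}
    \<and> (\<lambda>x. ((deriv f x)\<^sup>2 - f x * deriv (deriv f) x) / ((f x)\<^sup>2 + (deriv f x)\<^sup>2))
         integrable_on {a..b}
    \<and> real (card {x \<in> {a..b}. f x = 0}) =
       (1 / pi) * (arctan (deriv f b / f b) - arctan (deriv f a / f a)
         + integral {a..b} (\<lambda>x. ((deriv f x)\<^sup>2 - f x * deriv (deriv f) x)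
                                 / ((f x)\<^sup>2 + (deriv f x)\<^sup>2)))"
proof -
  define Z where "Z = {x \<in> {a..b}. f x = 0}"
  have "f a \<noteq> 0" and "f b \<noteq> 0"
    using assms(4) by auto
  then have below_a: "{w \<in> Z. w < a} = {}" and below_b: "{w \<in> Z. w < b} = Z"
    unfolding Z_def by (auto simp: less_le)
  have "prufer_angle f Z a = pi / 2 - arctan (deriv f a / f a)"
    and "prufer_angle f Z b = pi * card Z + pi / 2 - arctan (deriv f b / f b)"
    using \<open>f a \<noteq> 0\<close> \<open>f b \<noteq> 0\<close> unfolding prufer_angle_def below_a below_b by simp_all
  moreover have "finite Z"
    unfolding Z_def using assms(1,2) compact_Icc by (rule finite_zeros_in_compact)
  moreover note prufer_angle_has_integral[OF assms(1,2) less_imp_le[OF \<open>a < b\<close>], folded Z_def]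
  ultimately show ?thesis
    unfolding Z_def[symmetric] by (auto simp: integral_unique field_simps)
qed

end
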